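(* Let $U$ be a commutative supertropical monoid with distinguished idempotent $e$. Then $U$ is a semiring (with respect to the addition defined below) if and only if the following condition holds: (Dis) for all $x,y,z\in U$: if $0<ex<ey$ and $exz=eyz$, then $yz=eyz$ (i.e. $yz\in eU$). In this case the semiring $U$ is a supertropical semiring.
   Context: A bipotent semiring is a commutative monoid $(M,\cdot)$ with absorbing element $0$, equipped with a total order compatible with multiplication ($x\le y\Rightarrow xz\le yz$) in which $0$ is the least element; its addition is $x+y=\max(x,y)$. A supertropical monoid is a monoid $(U,\cdot)$ with an absorbing element $0$ and a distinguished central idempotent $e$ such that $ex=0$ implies $x=0$, together with a total ordering on the submonoid $M:=eU$ compatible with multiplication, making $M$ a bipotent semiring (the ghost ideal). On a supertropical monoid $U$ define the addition $x+y:=y$ if $ex<ey$, $x+y:=x$ if $ex>ey$, and $x+y:=ex$ if $ex=ey$. One says $U$ "is a semiring" if this addition is associative and multiplication distributes over it. A supertropical semiring is a semiring $U$ in which $e:=1+1$ is idempotent, $eU$ is bipotent (sums of elements of $eU$ lie in $\{x,y\}$), and for all $x,y$: $x+y=ex$ if $ex=ey$, and $x+y\in\{x,y\}$ otherwise. *)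

theory Defs
  imports Main
begin

text \<open>The distinguished idempotent
is e, and le is a total order on the ghost ideal M = eU (its values outside M are irrelevant).\<close>

definition ghost :: "'a::{comm_monoid_mult,mult_zero} \<Rightarrow> 'a set" where
  "ghost e = range (\<lambda>x. e * x)"

definition comm_supertropical_monoid ::
  "'a::{comm_monoid_mult,mult_zero} \<Rightarrow> ('a \<Rightarrow> 'a \<Rightarrow> bool) \<Rightarrow> bool" where
  "comm_supertropical_monoid e le \<longleftrightarrow>
     e * e = e \<and>
     (\<forall>x. e * x = 0 \<longrightarrow> x = 0) \<and>
     (\<forall>x\<in>ghost e. le x x) \<and>
     (\<forall>x\<in>ghost e. \<forall>y\<in>ghost e. le x y \<and> le y x \<longrightarrow> x = y) \<and>
     (\<forall>x\<in>ghost e. \<forall>y\<in>ghost e. \<forall>z\<in>ghost e. le x y \<and> le y z \<longrightarrow> le x z) \<and>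
     (\<forall>x\<in>ghost e. \<forall>y\<in>ghost e. le x y \<or> le y x) \<and>
     (\<forall>x\<in>ghost e. \<forall>y\<in>ghost e. \<forall>z\<in>ghost e. le x y \<longrightarrow> le (x * z) (y * z)) \<and>
     (\<forall>x\<in>ghost e. le 0 x)"

definition st_less :: "('a \<Rightarrow> 'a \<Rightarrow> bool) \<Rightarrow> 'a \<Rightarrow> 'a \<Rightarrow> bool" where
  "st_less le x y \<longleftrightarrow> le x y \<and> x \<noteq> y"

definition st_add ::
  "'a::{comm_monoid_mult,mult_zero} \<Rightarrow> ('a \<Rightarrow> 'a \<Rightarrow> bool) \<Rightarrow> 'a \<Rightarrow> 'a \<Rightarrow> 'a" where
  "st_add e le x y =
     (if st_less le (e * x) (e * y) then y
      else if st_less le (e * y) (e * x) then x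
      else e * x)"

definition st_is_semiring ::
  "'a::{comm_monoid_mult,mult_zero} \<Rightarrow> ('a \<Rightarrow> 'a \<Rightarrow> bool) \<Rightarrow> bool" where
  "st_is_semiring e le \<longleftrightarrow>
     (\<forall>x y z. st_add e le (st_add e le x y) z = st_add e le x (st_add e le y z)) \<and>
     (\<forall>x y z. z * st_add e le x y = st_add e le (z * x) (z * y)) \<and>
     (\<forall>x y z. st_add e le x y * z = st_add e le (x * z) (y * z))"

definition st_supertropical_semiring ::
  "'a::{comm_monoid_mult,mult_zero} \<Rightarrow> ('a \<Rightarrow> 'a \<Rightarrow> bool) \<Rightarrow> bool" where
  "st_supertropical_semiring e le \<longleftrightarrow>
     st_is_semiring e le \<and>
     (let e' = st_add e le 1 1 in
        e' * e' = e' \<and>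
        (\<forall>x\<in>ghost e'. \<forall>y\<in>ghost e'. st_add e le x y \<in> {x, y}) \<and>
        (\<forall>x y. e' * x = e' * y \<longrightarrow> st_add e le x y = e' * x) \<and>
        (\<forall>x y. e' * x \<noteq> e' * y \<longrightarrow> st_add e le x y \<in> {x, y}))"

definition cond_Dis ::
  "'a::{comm_monoid_mult,mult_zero} \<Rightarrow> ('a \<Rightarrow> 'a \<Rightarrow> bool) \<Rightarrow> bool" where
  "cond_Dis e le \<longleftrightarrow>
     (\<forall>x y z. st_less le 0 (e * x) \<and> st_less le (e * x) (e * y) \<and> e * x * z = e * y * z
        \<longrightarrow> y * z = e * y * z)"

end

theory Submission
  imports Defs
begin

text \<open>Since the addition only compares ghost images, associativity holds in every
supertropical monoid, by a case analysis on the order of \<open>ex, ey, ez\<close>. Distributivity can only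
fail when multiplication by \<open>z\<close> collapses a strict inequality \<open>ex < ey\<close> to \<open>exz = eyz\<close>: then
\<open>(x + y)z = yz\<close> while \<open>xz + yz = eyz\<close>, and (Dis) says exactly that these agree. Finally
\<open>1 + 1 = e\<close>, which makes the supertropical axioms immediate.\<close>

locale comm_st_monoid =
  fixes e :: "'a::{comm_monoid_mult,mult_zero}" and le :: "'a \<Rightarrow> 'a \<Rightarrow> bool"
  assumes comm_supertropical_monoid: "comm_supertropical_monoid e le"
begin

abbreviation plus_st :: "'a \<Rightarrow> 'a \<Rightarrow> 'a" (infixl "\<oplus>" 65) where
  "x \<oplus> y \<equiv> st_add e le x y"

abbreviation less_st :: "'a \<Rightarrow> 'a \<Rightarrow> bool" (infix "\<prec>" 50) where
  "x \<prec> y \<equiv> st_less le x y"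

lemma ghost_mem [simp]: "e * x \<in> ghost e"
  unfolding ghost_def by auto

lemma ghost_idem [simp]: "e * (e * x) = e * x"
  using comm_supertropical_monoid unfolding comm_supertropical_monoid_def
  by (metis mult.assoc)

lemma ghost_eq_zero_imp: "e * x = 0 \<Longrightarrow> x = 0"
  using comm_supertropical_monoid unfolding comm_supertropical_monoid_def by blast

lemma ghost_le_total: "le (e * x) (e * y) \<or> le (e * y) (e * x)"
  using comm_supertropical_monoid unfolding comm_supertropical_monoid_def by (meson ghost_mem)

lemma ghost_le_antisym: "le (e * x) (e * y) \<Longrightarrow> le (e * y) (e * x) \<Longrightarrow> e * x = e * y"
  using comm_supertropical_monoid unfolding comm_supertropical_monoid_def by (meson ghost_mem)

lemma ghost_le_trans: "le (e * x) (e * y) \<Longrightarrow> le (e * y) (e * z) \<Longrightarrow> le (e * x) (e * z)"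
  using comm_supertropical_monoid unfolding comm_supertropical_monoid_def by (meson ghost_mem)

lemma ghost_zero_le: "le 0 (e * x)"
  using comm_supertropical_monoid unfolding comm_supertropical_monoid_def by (meson ghost_mem)

lemma ghost_le_mult_right: "le (e * x) (e * y) \<Longrightarrow> le (e * (x * z)) (e * (y * z))"
proof -
  assume "le (e * x) (e * y)"
  then have "le (e * x * (e * z)) (e * y * (e * z))"
    using comm_supertropical_monoid unfolding comm_supertropical_monoid_def by (meson ghost_mem)
  moreover have "e * w * (e * z) = e * (w * z)" for w
    by (metis ghost_idem mult.assoc mult.commute)
  ultimately show ?thesis by simp
qed

lemma ghost_less_trichotomy: "e * x \<prec> e * y \<or> e * y \<prec> e * x \<or> e * x = e * y"
  using ghost_le_total unfolding st_less_def by metis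

lemma ghost_less_asym: "e * x \<prec> e * y \<Longrightarrow> \<not> e * y \<prec> e * x"
  using ghost_le_antisym unfolding st_less_def by metis

lemma ghost_less_trans: "e * x \<prec> e * y \<Longrightarrow> e * y \<prec> e * z \<Longrightarrow> e * x \<prec> e * z"
  using ghost_le_trans ghost_le_antisym unfolding st_less_def by metis

lemma ghost_eq_zero_or_pos: "e * x = 0 \<or> 0 \<prec> e * x"
  using ghost_zero_le unfolding st_less_def by auto

lemma st_add_less: "e * x \<prec> e * y \<Longrightarrow> x \<oplus> y = y"
  unfolding st_add_def by simp

lemma st_add_greater: "e * y \<prec> e * x \<Longrightarrow> x \<oplus> y = x"
  unfolding st_add_def using ghost_less_asym by auto

lemma st_add_eq: "e * x = e * y \<Longrightarrow> x \<oplus> y = e * x"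
  unfolding st_add_def st_less_def by simp

lemma st_add_commute: "x \<oplus> y = y \<oplus> x"
  using ghost_less_trichotomy[of x y] st_add_less st_add_greater st_add_eq by metis

lemma st_add_assoc: "x \<oplus> y \<oplus> z = x \<oplus> (y \<oplus> z)"
  using ghost_less_trichotomy[of x y] ghost_less_trichotomy[of y z] ghost_less_trichotomy[of x z]
  by (elim disjE; simp add: st_add_less st_add_greater st_add_eq;
      metis ghost_less_trans ghost_less_asym st_add_less st_add_greater st_add_eq ghost_idem)

lemma cond_Dis_if_distrib:
  assumes distrib: "\<And>x y z. (x \<oplus> y) * z = x * z \<oplus> y * z"
  shows "cond_Dis e le"
  unfolding cond_Dis_def
proof (intro allI impI, elim conjE)
  fix x y z
  assume less: "e * x \<prec> e * y" and collapse: "e * x * z = e * y * z"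
  have "y * z = (x \<oplus> y) * z" using st_add_less[OF less] by simp
  also have "\<dots> = x * z \<oplus> y * z" by (rule distrib)
  also have "\<dots> = e * (x * z)" using collapse by (intro st_add_eq) (simp add: ac_simps)
  finally show "y * z = e * y * z" using collapse by (simp add: ac_simps)
qed

lemma st_add_mult_right_if_less:
  assumes Dis: "cond_Dis e le" and less: "e * x \<prec> e * y"
  shows "x * z \<oplus> y * z = y * z"
proof -
  have le: "le (e * (x * z)) (e * (y * z))"
    using ghost_le_mult_right less unfolding st_less_def by blast
  show ?thesis
  proof (cases "e * (x * z) = e * (y * z)")
    case False
    then show ?thesis using le by (simp add: st_add_less st_less_def)
  next
    case collapse: True
    have "y * z = e * (y * z)"
    proof (cases "e * x = 0")
      case True
      then have "e * (y * z) = 0" using collapse ghost_eq_zero_imp[of x] by simp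
      then show ?thesis using ghost_eq_zero_imp by simp
    next
      case False
      then have "0 \<prec> e * x" using ghost_eq_zero_or_pos by blast
      moreover have "e * x * z = e * y * z" using collapse by (simp add: mult.assoc)
      ultimately have "y * z = e * y * z" using Dis less unfolding cond_Dis_def by blast
      then show ?thesis by (simp add: mult.assoc)
    qed
    then show ?thesis using collapse st_add_eq by metis
  qed
qed

lemma st_add_mult_right:
  assumes Dis: "cond_Dis e le"
  shows "(x \<oplus> y) * z = x * z \<oplus> y * z"
  using ghost_less_trichotomy[of x y]
proof (elim disjE)
  assume "e * x \<prec> e * y"
  then show ?thesis using st_add_less st_add_mult_right_if_less[OF Dis] by metis
next
  assume "e * y \<prec> e * x"
  then show ?thesis
    using st_add_greater st_add_mult_right_if_less[OF Dis] st_add_commute by metis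
next
  assume eq: "e * x = e * y"
  then have "e * (x * z) = e * (y * z)" by (metis mult.assoc)
  then show ?thesis using eq st_add_eq by (metis mult.assoc)
qed

lemma st_is_semiring_iff_cond_Dis: "st_is_semiring e le \<longleftrightarrow> cond_Dis e le"
proof
  assume "st_is_semiring e le"
  then show "cond_Dis e le"
    unfolding st_is_semiring_def by (intro cond_Dis_if_distrib) blast
next
  assume "cond_Dis e le"
  then show "st_is_semiring e le"
    unfolding st_is_semiring_def using st_add_assoc st_add_mult_right by (metis mult.commute)
qed

lemma st_add_one_one: "1 \<oplus> 1 = e"
  using st_add_eq[of 1 1] by simp

lemma st_supertropical_semiring_if_st_is_semiring:
  assumes "st_is_semiring e le"
  shows "st_supertropical_semiring e le"
  unfolding st_supertropical_semiring_def Let_def st_add_one_one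
proof (intro conjI assms ballI allI impI)
  show "e * e = e" using ghost_idem[of 1] by simp
next
  fix x y
  assume "x \<in> ghost e" "y \<in> ghost e"
  then obtain a b where "x = e * a" "y = e * b" unfolding ghost_def by auto
  then show "x \<oplus> y \<in> {x, y}"
    using ghost_less_trichotomy[of x y] st_add_less st_add_greater st_add_eq
    by (metis ghost_idem insertI1 insertI2 singletonI)
next
  fix x y
  show "e * x = e * y \<Longrightarrow> x \<oplus> y = e * x" by (rule st_add_eq)
  show "e * x \<noteq> e * y \<Longrightarrow> x \<oplus> y \<in> {x, y}"
    using ghost_less_trichotomy[of x y] st_add_less st_add_greater by auto
qed

end

theorem theorem1p2:
  fixes e :: "'a::{comm_monoid_mult,mult_zero}" and le :: "'a \<Rightarrow> 'a \<Rightarrow> bool"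
  assumes "comm_supertropical_monoid e le"
  shows "(st_is_semiring e le \<longleftrightarrow> cond_Dis e le) \<and>
         (st_is_semiring e le \<longrightarrow> st_supertropical_semiring e le)"
proof -
  interpret comm_st_monoid e le by unfold_locales (rule assms)
  show ?thesis
    using st_is_semiring_iff_cond_Dis st_supertropical_semiring_if_st_is_semiring by blast
qed

end
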